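(* In the setting below, $V=\ker\bar{\phi}$ as subspaces of $D(\mathcal{A})/D(\mathcal{A}')$.
   Context: A complex subspace arrangement in $\mathbb{C}^l$ is a finite set of complex linear subspaces of $\mathbb{C}^l$ with no two distinct members $x\subset y$. For a finite set $\mathcal{C}$ of linear subspaces of a complex vector space $W$ with a linear order, $D(\mathcal{C})$ is the cochain complex over $\mathbb{Q}$ with basis all subsets $\sigma\subseteq\mathcal{C}$, where with $\vee\sigma=\bigcap_{x\in\sigma}x$ ($\vee\emptyset=W$), $\deg\sigma=2\operatorname{codim}_W(\vee\sigma)-|\sigma|$ and for $\sigma=\{x_{i_1},\dots,x_{i_r}\}$ in increasing order, $d\sigma=\sum_{j:\vee(\sigma\setminus\{x_{i_j}\})=\vee\sigma}(-1)^j(\sigma\setminus\{x_{i_j}\})$. Setting: $\mathcal{A}=\{x_0,\dots,x_n\}$ is a complex subspace arrangement in $\mathbb{C}^l$, $\mathcal{A}'=\mathcal{A}\setminus\{x_0\}$; on $\mathcal{A}'$, $y\sim z$ iff $x_0\cap y=x_0\cap z$, with classes $\mathcal{A}_1,\dots,\mathcal{A}_r$; the linear order is $x_0<x_1<\dots<x_n$ with elements of $\mathcal{A}_i$ preceding elements of $\mathcal{A}_j$ whenever $i<j$. $D(\mathcal{A}')$ is the subcomplex of $D(\mathcal{A})$ spanned by subsets not containing $x_0$. $\widetilde{\mathcal{A}''}=\{x_0\cap y\mid y\in\mathcal{A}'\}$, ordered by the order of the corresponding classes, and $D(\widetilde{\mathcal{A}''})$ is formed with ambient space $x_0$. $E=\{(y,z)\in\mathcal{A}'\times\mathcal{A}'\mid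 y\sim z,\ y\ne z\}$. The linear map $\phi\colon D(\mathcal{A})\to D(\widetilde{\mathcal{A}''})$ is: $\phi(\sigma)=0$ if $x_0\notin\sigma$ or if $x_0\in\sigma$ and $\{y,z\}\subseteq\sigma$ for some $(y,z)\in E$; otherwise, for $\sigma=\{x_0,x_{i_1},\dots,x_{i_r}\}$, $\phi(\sigma)=(-1)^r\{x_0\cap x_{i_1},\dots,x_0\cap x_{i_r}\}$. Since $\phi$ vanishes on $D(\mathcal{A}')$ it induces $\bar\phi\colon D(\mathcal{A})/D(\mathcal{A}')\to D(\widetilde{\mathcal{A}''})$. For $(u,v)\in E$, $I_{u,v}$ is the subspace of $D(\mathcal{A})/D(\mathcal{A}')$ spanned by the classes of all $\{x_0,u\}\cup Y-\{x_0,v\}\cup Y$ and all $\{x_0,u,v\}\cup Y$, for $Y\subseteq\mathcal{A}\setminus\{x_0,u,v\}$. Finally $V=\sum_{(u,v)\in E}I_{u,v}$ (with $V=0$ if $E=\emptyset$). *)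

theory Defs
  imports "HOL-Analysis.Analysis"
begin

text \<open>Complex linear subspaces of C^l are subsets of type complex^'l that are
  subspaces for the complex scalar multiplication (*s), i.e. vec.subspace.\<close>

type_synonym 'l sub = "(complex ^ 'l) set"

text \<open>Vectors of the Q-vector space with basis all subsets sigma of C are
  represented as coefficient functions on sets of subspaces.\<close>
type_synonym 'l cochain = "'l sub set \<Rightarrow> rat"

definition subspace_arrangement :: "'l::finite sub set \<Rightarrow> bool" where
  "subspace_arrangement A \<longleftrightarrow> finite A \<and> (\<forall>y\<in>A. vec.subspace y)
     \<and> (\<forall>y\<in>A. \<forall>z\<in>A. y \<subseteq> z \<longrightarrow> y = z)"

definition basis_vec :: "'l sub set \<Rightarrow> 'l cochain" where
  "basis_vec \<sigma> = (\<lambda>\<tau>. if \<tau> = \<sigma> then 1 else 0)"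

definition Dspace :: "'l sub set \<Rightarrow> 'l cochain set" where
  "Dspace C = {c. \<forall>\<sigma>. c \<sigma> \<noteq> 0 \<longrightarrow> \<sigma> \<subseteq> C}"

definition Dsub :: "'l sub \<Rightarrow> 'l sub set \<Rightarrow> 'l cochain set" where
  "Dsub x0 A = {c \<in> Dspace A. \<forall>\<sigma>. c \<sigma> \<noteq> 0 \<longrightarrow> x0 \<notin> \<sigma>}"

definition simrel :: "'l sub \<Rightarrow> 'l sub \<Rightarrow> 'l sub \<Rightarrow> bool" where
  "simrel x0 y z \<longleftrightarrow> x0 \<inter> y = x0 \<inter> z"

definition Epairs :: "'l sub \<Rightarrow> 'l sub set \<Rightarrow> ('l sub \<times> 'l sub) set" where
  "Epairs x0 A = {(y, z). y \<in> A - {x0} \<and> z \<in> A - {x0} \<and> simrel x0 y z \<and> y \<noteq> z}"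

text \<open>phi on basis elements (values in D(A''~), basis = subsets of {x0 \<inter> y}).\<close>
definition phi_basis :: "'l sub \<Rightarrow> 'l sub set \<Rightarrow> 'l sub set \<Rightarrow> 'l cochain" where
  "phi_basis x0 A \<sigma> =
     (if x0 \<notin> \<sigma> \<or> (\<exists>(y, z)\<in>Epairs x0 A. y \<in> \<sigma> \<and> z \<in> \<sigma>) then (\<lambda>_. 0)
      else (\<lambda>\<tau>. (-1) ^ (card \<sigma> - 1) * basis_vec ((\<lambda>y. x0 \<inter> y) ` (\<sigma> - {x0})) \<tau>))"

definition phi :: "'l sub \<Rightarrow> 'l sub set \<Rightarrow> 'l cochain \<Rightarrow> 'l cochain" where
  "phi x0 A c = (\<lambda>\<tau>. \<Sum>\<sigma>\<in>Pow A. c \<sigma> * phi_basis x0 A \<sigma> \<tau>)"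

definition cls :: "'l sub \<Rightarrow> 'l sub set \<Rightarrow> 'l cochain \<Rightarrow> 'l cochain set" where
  "cls x0 A c = {(\<lambda>\<tau>. c \<tau> + d \<tau>) | d. d \<in> Dsub x0 A}"

text \<open>The quotient space D(A)/D(A') as a set of cosets.\<close>
definition quot :: "'l sub \<Rightarrow> 'l sub set \<Rightarrow> 'l cochain set set" where
  "quot x0 A = cls x0 A ` Dspace A"

definition qspan :: "'l cochain set \<Rightarrow> 'l cochain set" where
  "qspan G = {c. \<exists>S a. finite S \<and> S \<subseteq> G \<and> c = (\<lambda>\<tau>. \<Sum>g\<in>S. a g * g \<tau>)}"

definition Igens :: "'l sub \<Rightarrow> 'l sub set \<Rightarrow> 'l sub \<Rightarrow> 'l sub \<Rightarrow> 'l cochain set" where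
  "Igens x0 A u v =
     {(\<lambda>\<tau>. basis_vec (insert x0 (insert u Y)) \<tau> - basis_vec (insert x0 (insert v Y)) \<tau>)
        | Y. Y \<subseteq> A - {x0, u, v}}
   \<union> {basis_vec (insert x0 (insert u (insert v Y))) | Y. Y \<subseteq> A - {x0, u, v}}"

definition Isub :: "'l sub \<Rightarrow> 'l sub set \<Rightarrow> 'l sub \<Rightarrow> 'l sub \<Rightarrow> 'l cochain set set" where
  "Isub x0 A u v = cls x0 A ` qspan (Igens x0 A u v)"

text \<open>V = sum over (u,v) in E of I_{u,v} (the zero subspace if E is empty):
  the span of the classes of all generators.\<close>
definition Vsub :: "'l sub \<Rightarrow> 'l sub set \<Rightarrow> 'l cochain set set" where
  "Vsub x0 A = cls x0 A ` qspan (\<Union>(u, v)\<in>Epairs x0 A. Igens x0 A u v)"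

definition ker_phibar :: "'l sub \<Rightarrow> 'l sub set \<Rightarrow> 'l cochain set set" where
  "ker_phibar x0 A = cls x0 A ` {c \<in> Dspace A. phi x0 A c = (\<lambda>_. 0)}"

end

theory Submission
  imports Defs "HOL-Library.Function_Algebras"
begin

text \<open>phi vanishes on the basis elements that avoid x0 or contain an E-pair, and sends every
other ("admissible") \<sigma> to \<plusminus>{x0 \<inter> y | y \<in> \<sigma> - {x0}}, the restriction of \<sigma>, with a sign that
depends only on the restriction. Exchanging a member of \<sigma> for another member of its \<sim>-class
changes the basis element by a generator of some I_{u,v} and does not change its image, so V lies
in the kernel. Conversely, two admissible sets with the same restriction are joined by a chain of
such exchanges; hence modulo V and D(A') every cochain is a combination of one representative per
restriction, whose coefficients are the fibre sums of the original coefficients, and on the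
kernel of phi these fibre sums vanish.\<close>

definition scaleQ :: "rat \<Rightarrow> ('a \<Rightarrow> rat) \<Rightarrow> 'a \<Rightarrow> rat" where
  "scaleQ r f = (\<lambda>t. r * f t)"

interpretation qvec: module scaleQ
  by unfold_locales (auto simp: scaleQ_def fun_eq_iff algebra_simps)

lemma sum_apply: "sum f S x = (\<Sum>a\<in>S. f a x)"
  by (induction S rule: infinite_finite_induct) auto

lemma qspan_eq_span: "qspan G = qvec.span G"
  unfolding qspan_def qvec.span_explicit by (auto simp: sum_apply scaleQ_def fun_eq_iff)

lemma Dspace_iff: "c \<in> Dspace A \<longleftrightarrow> (\<forall>\<sigma>. \<not> \<sigma> \<subseteq> A \<longrightarrow> c \<sigma> = 0)"
  unfolding Dspace_def mem_Collect_eq by meson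

lemma Dsub_iff: "c \<in> Dsub x0 A \<longleftrightarrow> (\<forall>\<sigma>. \<not> \<sigma> \<subseteq> A \<or> x0 \<in> \<sigma> \<longrightarrow> c \<sigma> = 0)"
  unfolding Dsub_def Dspace_def mem_Collect_eq by meson

lemma subspace_Dspace: "qvec.subspace (Dspace A)"
  unfolding qvec.subspace_def scaleQ_def by (simp add: Dspace_iff)

lemma subspace_Dsub: "qvec.subspace (Dsub x0 A)"
  unfolding qvec.subspace_def scaleQ_def by (simp add: Dsub_iff)

lemma basis_vec_in_Dspace: "\<sigma> \<subseteq> A \<Longrightarrow> basis_vec \<sigma> \<in> Dspace A"
  by (auto simp: basis_vec_def Dspace_def)

lemma basis_vec_in_Dsub: "\<sigma> \<subseteq> A \<Longrightarrow> x0 \<notin> \<sigma> \<Longrightarrow> basis_vec \<sigma> \<in> Dsub x0 A"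
  by (auto simp: basis_vec_def Dsub_iff)

lemma Dspace_basis_expansion:
  assumes "finite A" and "c \<in> Dspace A"
  shows "c = (\<Sum>\<sigma>\<in>Pow A. scaleQ (c \<sigma>) (basis_vec \<sigma>))"
proof
  fix \<tau>
  have "(\<Sum>\<sigma>\<in>Pow A. scaleQ (c \<sigma>) (basis_vec \<sigma>)) \<tau> = (\<Sum>\<sigma>\<in>Pow A. if \<sigma> = \<tau> then c \<sigma> else 0)"
    unfolding sum_apply scaleQ_def basis_vec_def by (rule sum.cong) auto
  also have "\<dots> = c \<tau>"
    using assms by (simp add: sum.delta' Dspace_iff)
  finally show "c \<tau> = (\<Sum>\<sigma>\<in>Pow A. scaleQ (c \<sigma>) (basis_vec \<sigma>)) \<tau>" by simp
qed

lemma cls_eq_translate: "cls x0 A c = (+) c ` Dsub x0 A"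
  unfolding cls_def by (auto simp: plus_fun_def)

lemma cls_add_Dsub:
  assumes "d \<in> Dsub x0 A"
  shows "cls x0 A (c + d) = cls x0 A c"
proof -
  have "(+) d ` Dsub x0 A = Dsub x0 A"
    using assms subspace_Dsub qvec.subspace_add qvec.subspace_diff
    by (force intro: image_eqI[where x = "e - d" for e])
  moreover have "(+) (c + d) ` Dsub x0 A = (+) c ` ((+) d ` Dsub x0 A)"
    unfolding image_image by (simp add: add.assoc)
  ultimately show ?thesis
    unfolding cls_eq_translate by simp
qed

lemma phi_module_hom: "module_hom scaleQ scaleQ (phi x0 A)"
  by unfold_locales
    (auto simp: phi_def scaleQ_def fun_eq_iff distrib_right sum.distrib sum_distrib_left mult.assoc)

lemma phi_basis_vec:
  assumes "finite A" and "\<sigma> \<subseteq> A"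
  shows "phi x0 A (basis_vec \<sigma>) = phi_basis x0 A \<sigma>"
proof -
  have "(\<Sum>\<rho>\<in>Pow A. basis_vec \<sigma> \<rho> * phi_basis x0 A \<rho> \<tau>) = phi_basis x0 A \<sigma> \<tau>" for \<tau>
  proof -
    have "(\<Sum>\<rho>\<in>Pow A. basis_vec \<sigma> \<rho> * phi_basis x0 A \<rho> \<tau>)
        = (\<Sum>\<rho>\<in>Pow A. if \<rho> = \<sigma> then phi_basis x0 A \<rho> \<tau> else 0)"
      by (rule sum.cong) (auto simp: basis_vec_def)
    then show ?thesis using assms by (simp add: sum.delta)
  qed
  then show ?thesis unfolding phi_def by auto
qed

definition restriction :: "'l sub \<Rightarrow> 'l sub set \<Rightarrow> 'l sub set" where
  "restriction x0 \<sigma> = (\<lambda>y. x0 \<inter> y) ` (\<sigma> - {x0})"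

definition has_E_pair :: "'l sub \<Rightarrow> 'l sub set \<Rightarrow> 'l sub set \<Rightarrow> bool" where
  "has_E_pair x0 A \<sigma> \<longleftrightarrow> (\<exists>(y, z)\<in>Epairs x0 A. y \<in> \<sigma> \<and> z \<in> \<sigma>)"

lemma phi_basis_eq: "phi_basis x0 A \<sigma> =
  (if x0 \<notin> \<sigma> \<or> has_E_pair x0 A \<sigma> then 0
   else (\<lambda>\<tau>. (-1) ^ (card \<sigma> - 1) * basis_vec (restriction x0 \<sigma>) \<tau>))"
  unfolding phi_basis_def has_E_pair_def restriction_def by (simp add: zero_fun_def)

lemma Epairs_iff: "(a, b) \<in> Epairs x0 A \<longleftrightarrow>
   a \<in> A \<and> a \<noteq> x0 \<and> b \<in> A \<and> b \<noteq> x0 \<and> x0 \<inter> a = x0 \<inter> b \<and> a \<noteq> b"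
  unfolding Epairs_def simrel_def by simp

lemma Epairs_sym: "(u, v) \<in> Epairs x0 A \<Longrightarrow> (v, u) \<in> Epairs x0 A"
  unfolding Epairs_def simrel_def by auto

lemma has_E_pair_exchange:
  assumes uv: "(u, v) \<in> Epairs x0 A" and v: "v \<notin> Y"
    and "has_E_pair x0 A (insert x0 (insert u Y))"
  shows "has_E_pair x0 A (insert x0 (insert v Y))"
proof -
  obtain y z where yz: "(y, z) \<in> Epairs x0 A" "y \<in> insert x0 (insert u Y)" "z \<in> insert x0 (insert u Y)"
    using assms(3) unfolding has_E_pair_def by blast
  define sw where "sw w = (if w = u then v else w)" for w
  have yz': "y \<in> insert u Y" "z \<in> insert u Y" "y \<noteq> z" "x0 \<inter> y = x0 \<inter> z"
    using yz unfolding Epairs_iff by blast+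
  have sw_in: "sw w \<in> insert v Y" if "w \<in> insert u Y" for w
    using that unfolding sw_def by auto
  have sw_meet: "x0 \<inter> sw w = x0 \<inter> w" for w
    using uv unfolding Epairs_iff sw_def by auto
  have "sw y \<noteq> sw z"
    using yz'(1-3) v unfolding sw_def by auto
  moreover have "sw w \<in> A - {x0}" if "(w, w') \<in> Epairs x0 A" for w w'
    using uv that unfolding Epairs_iff sw_def by auto
  ultimately have "(sw y, sw z) \<in> Epairs x0 A"
    using yz(1) Epairs_sym[OF yz(1)] sw_meet[of y] sw_meet[of z] yz'(4)
    unfolding Epairs_iff by (metis DiffE insertI1)
  then show ?thesis
    unfolding has_E_pair_def using sw_in yz'(1,2) by blast
qed

lemma phi_basis_exchange:
  assumes fin: "finite A" and uv: "(u, v) \<in> Epairs x0 A" and Y: "Y \<subseteq> A - {x0, u, v}"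
  shows "phi_basis x0 A (insert x0 (insert u Y)) = phi_basis x0 A (insert x0 (insert v Y))"
proof -
  have uv': "u \<noteq> x0" "v \<noteq> x0" "x0 \<inter> u = x0 \<inter> v" "u \<notin> Y" "v \<notin> Y" "x0 \<notin> Y"
    using uv Y unfolding Epairs_iff by blast+
  have "has_E_pair x0 A (insert x0 (insert u Y)) = has_E_pair x0 A (insert x0 (insert v Y))"
    using has_E_pair_exchange[OF uv uv'(5)] has_E_pair_exchange[OF Epairs_sym[OF uv] uv'(4)] by blast
  moreover have "card (insert x0 (insert u Y)) = card (insert x0 (insert v Y))"
    using finite_subset[OF Y] fin uv' by simp
  moreover have "restriction x0 (insert x0 (insert u Y)) = restriction x0 (insert x0 (insert v Y))"
  proof -
    have "insert x0 (insert w Y) - {x0} = insert w Y" if "w \<noteq> x0" for w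
      using that uv' by blast
    then show ?thesis unfolding restriction_def using uv' by simp
  qed
  ultimately show ?thesis unfolding phi_basis_eq by simp
qed

definition Vgens :: "'l sub \<Rightarrow> 'l sub set \<Rightarrow> 'l cochain set" where
  "Vgens x0 A = (\<Union>(u, v)\<in>Epairs x0 A. Igens x0 A u v)"

lemma exchange_in_Vgens:
  assumes "(u, v) \<in> Epairs x0 A" and "Y \<subseteq> A - {x0, u, v}"
  shows "basis_vec (insert x0 (insert u Y)) - basis_vec (insert x0 (insert v Y)) \<in> Vgens x0 A"
  using assms unfolding Vgens_def Igens_def fun_diff_def by blast

lemma basis_vec_E_pair_in_Vgens:
  assumes "\<sigma> \<subseteq> A" and "x0 \<in> \<sigma>" and "has_E_pair x0 A \<sigma>"
  shows "basis_vec \<sigma> \<in> Vgens x0 A"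
proof -
  obtain u v where uv: "(u, v) \<in> Epairs x0 A" "u \<in> \<sigma>" "v \<in> \<sigma>"
    using assms(3) unfolding has_E_pair_def by blast
  define Y where "Y = \<sigma> - {x0, u, v}"
  have "\<sigma> = insert x0 (insert u (insert v Y))"
    unfolding Y_def using uv assms(2) by blast
  moreover have "Y \<subseteq> A - {x0, u, v}"
    unfolding Y_def using assms(1) by blast
  ultimately show ?thesis
    unfolding Vgens_def Igens_def using uv(1) by blast
qed

lemma Vgens_in_kernel:
  assumes fin: "finite A" and x0: "x0 \<in> A" and g: "g \<in> Vgens x0 A"
  shows "g \<in> Dspace A \<and> phi x0 A g = 0"
proof -
  obtain u v Y where uv: "(u, v) \<in> Epairs x0 A" and Y: "Y \<subseteq> A - {x0, u, v}"
    and g_cases: "g = basis_vec (insert x0 (insert u Y)) - basis_vec (insert x0 (insert v Y))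
       \<or> g = basis_vec (insert x0 (insert u (insert v Y)))"
    using g unfolding Vgens_def Igens_def fun_diff_def by blast
  have "u \<in> A" "v \<in> A"
    using uv unfolding Epairs_iff by blast+
  then have sub: "insert x0 (insert u Y) \<subseteq> A" "insert x0 (insert v Y) \<subseteq> A"
    "insert x0 (insert u (insert v Y)) \<subseteq> A"
    using Y x0 by blast+
  show ?thesis
    using g_cases
  proof
    assume g_eq: "g = basis_vec (insert x0 (insert u Y)) - basis_vec (insert x0 (insert v Y))"
    have "phi x0 A g = 0"
      unfolding g_eq module_hom.diff[OF phi_module_hom] phi_basis_vec[OF fin sub(1)]
        phi_basis_vec[OF fin sub(2)] phi_basis_exchange[OF fin uv Y] by simp
    moreover have "g \<in> Dspace A"
      unfolding g_eq by (intro qvec.subspace_diff[OF subspace_Dspace] basis_vec_in_Dspace sub)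
    ultimately show ?thesis by blast
  next
    assume g_eq: "g = basis_vec (insert x0 (insert u (insert v Y)))"
    have "has_E_pair x0 A (insert x0 (insert u (insert v Y)))"
      unfolding has_E_pair_def using uv by blast
    then show ?thesis
      unfolding g_eq using sub(3) by (simp add: phi_basis_vec[OF fin] phi_basis_eq basis_vec_in_Dspace)
  qed
qed

lemma span_Vgens_in_kernel:
  assumes "finite A" and "x0 \<in> A"
  shows "qvec.span (Vgens x0 A) \<subseteq> Dspace A \<inter> {c. phi x0 A c = 0}"
  using assms Vgens_in_kernel
  by (intro qvec.span_minimal qvec.subspace_inter subspace_Dspace
      module_hom.subspace_kernel[OF phi_module_hom]) auto

definition admissible :: "'l sub \<Rightarrow> 'l sub set \<Rightarrow> 'l sub set \<Rightarrow> bool" where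
  "admissible x0 A \<sigma> \<longleftrightarrow> \<sigma> \<subseteq> A \<and> x0 \<in> \<sigma> \<and> \<not> has_E_pair x0 A \<sigma>"

lemma inj_on_restriction:
  assumes "admissible x0 A \<sigma>"
  shows "inj_on (\<lambda>y. x0 \<inter> y) (\<sigma> - {x0})"
proof (rule inj_onI, rule ccontr)
  fix y z
  assume "y \<in> \<sigma> - {x0}" "z \<in> \<sigma> - {x0}" "x0 \<inter> y = x0 \<inter> z" "y \<noteq> z"
  with assms have "(y, z) \<in> Epairs x0 A" "y \<in> \<sigma>" "z \<in> \<sigma>"
    unfolding admissible_def Epairs_iff by blast+
  with assms show False
    unfolding admissible_def has_E_pair_def by blast
qed

lemma card_admissible:
  assumes "finite A" and "admissible x0 A \<sigma>"
  shows "card \<sigma> = Suc (card (restriction x0 \<sigma>))"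
proof -
  have "finite \<sigma>" "x0 \<in> \<sigma>"
    using assms finite_subset unfolding admissible_def by blast+
  then have "card \<sigma> = Suc (card (\<sigma> - {x0}))"
    by (rule card_Suc_Diff1[symmetric])
  also have "card (\<sigma> - {x0}) = card (restriction x0 \<sigma>)"
    unfolding restriction_def by (rule card_image[OF inj_on_restriction[OF assms(2)], symmetric])
  finally show ?thesis .
qed

lemma phi_basis_admissible:
  assumes "finite A" and "\<sigma> \<subseteq> A" and "admissible x0 A \<tau>"
  shows "phi_basis x0 A \<sigma> (restriction x0 \<tau>) =
    (if admissible x0 A \<sigma> \<and> restriction x0 \<sigma> = restriction x0 \<tau> then (-1) ^ (card \<tau> - 1) else 0)"
proof (cases "admissible x0 A \<sigma>")
  case True
  then have "restriction x0 \<sigma> = restriction x0 \<tau> \<Longrightarrow> card \<sigma> = card \<tau>"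
    using card_admissible[OF assms(1)] assms(3) by metis
  with True show ?thesis
    unfolding phi_basis_eq basis_vec_def admissible_def by auto
next
  case False
  with assms(2) show ?thesis
    unfolding phi_basis_eq admissible_def by auto
qed

lemma admissible_exchange_step:
  assumes fin: "finite A" and adm: "admissible x0 A \<sigma>" and adm': "admissible x0 A \<sigma>'"
    and res: "restriction x0 \<sigma> = restriction x0 \<sigma>'" and ne: "\<sigma> \<noteq> \<sigma>'"
  obtains \<rho> where "admissible x0 A \<rho>" "restriction x0 \<rho> = restriction x0 \<sigma>"
    "card (\<rho> - \<sigma>') < card (\<sigma> - \<sigma>')" "basis_vec \<sigma> - basis_vec \<rho> \<in> Vgens x0 A"
proof -
  have "finite \<sigma>'" "card \<sigma> = card \<sigma>'"
    using card_admissible[OF fin adm] card_admissible[OF fin adm'] res adm' fin finite_subset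
    unfolding admissible_def by auto
  then obtain u where u: "u \<in> \<sigma>" "u \<notin> \<sigma>'"
    using card_subset_eq ne by blast
  have ux: "u \<noteq> x0" and uA: "u \<in> A" and x0: "x0 \<in> \<sigma>" "x0 \<in> \<sigma>'"
    using u adm adm' unfolding admissible_def by blast+
  have "x0 \<inter> u \<in> restriction x0 \<sigma>'"
    using res u ux unfolding restriction_def by blast
  then obtain v where v: "v \<in> \<sigma>'" "v \<noteq> x0" "x0 \<inter> u = x0 \<inter> v"
    unfolding restriction_def by auto
  have uv: "(u, v) \<in> Epairs x0 A"
    using uA ux v u adm' unfolding Epairs_iff admissible_def by blast
  have v\<sigma>: "v \<notin> \<sigma>"
    using adm uv u(1) unfolding admissible_def has_E_pair_def by blast
  define Y where "Y = \<sigma> - {x0, u}"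
  have \<sigma>_eq: "\<sigma> = insert x0 (insert u Y)" and Y: "Y \<subseteq> A - {x0, u, v}"
    unfolding Y_def using x0 u(1) v\<sigma> adm unfolding admissible_def by blast+
  define \<rho> where "\<rho> = insert x0 (insert v Y)"
  have "\<rho> \<subseteq> A"
    unfolding \<rho>_def using Y uv x0 adm unfolding Epairs_iff admissible_def by blast
  moreover have "\<not> has_E_pair x0 A \<rho>"
    using has_E_pair_exchange[OF Epairs_sym[OF uv], of Y] Y adm \<sigma>_eq
    unfolding \<rho>_def admissible_def by blast
  ultimately have "admissible x0 A \<rho>"
    unfolding admissible_def \<rho>_def by blast
  moreover have "restriction x0 \<rho> = restriction x0 \<sigma>"
  proof -
    have "\<rho> - {x0} = insert v Y" "\<sigma> - {x0} = insert u Y"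
      unfolding \<rho>_def Y_def using x0 u(1) ux v(2) by blast+
    then show ?thesis
      unfolding restriction_def using v(3) by simp
  qed
  moreover have "card (\<rho> - \<sigma>') < card (\<sigma> - \<sigma>')"
  proof -
    have "\<rho> - \<sigma>' = (\<sigma> - \<sigma>') - {u}"
      unfolding \<rho>_def Y_def using \<sigma>_eq v(1) x0 by blast
    then show ?thesis
      using u adm fin finite_subset unfolding admissible_def by (metis DiffI card_Diff1_less finite_Diff)
  qed
  moreover have "basis_vec \<sigma> - basis_vec \<rho> \<in> Vgens x0 A"
    unfolding \<rho>_def using exchange_in_Vgens[OF uv Y] \<sigma>_eq by simp
  ultimately show ?thesis
    using that by blast
qed

lemma admissible_diff_in_span_Vgens:
  assumes "finite A"
  shows "admissible x0 A \<sigma> \<Longrightarrow> admissible x0 A \<sigma>' \<Longrightarrow> restriction x0 \<sigma> = restriction x0 \<sigma>' \<Longrightarrow>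
    basis_vec \<sigma> - basis_vec \<sigma>' \<in> qvec.span (Vgens x0 A)"
proof (induction "card (\<sigma> - \<sigma>')" arbitrary: \<sigma> rule: less_induct)
  case less
  show ?case
  proof (cases "\<sigma> = \<sigma>'")
    case True
    then show ?thesis using qvec.span_zero by simp
  next
    case False
    obtain \<rho> where \<rho>: "admissible x0 A \<rho>" "restriction x0 \<rho> = restriction x0 \<sigma>"
      "card (\<rho> - \<sigma>') < card (\<sigma> - \<sigma>')" "basis_vec \<sigma> - basis_vec \<rho> \<in> Vgens x0 A"
      using admissible_exchange_step[OF assms less.prems False] .
    have "basis_vec \<rho> - basis_vec \<sigma>' \<in> qvec.span (Vgens x0 A)"
      using less.hyps[OF \<rho>(3) \<rho>(1) less.prems(2)] \<rho>(2) less.prems(3) by simp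
    moreover have "basis_vec \<sigma> - basis_vec \<rho> \<in> qvec.span (Vgens x0 A)"
      using \<rho>(4) by (rule qvec.span_base)
    ultimately have "(basis_vec \<sigma> - basis_vec \<rho>) + (basis_vec \<rho> - basis_vec \<sigma>') \<in> qvec.span (Vgens x0 A)"
      by (rule qvec.span_add[rotated])
    then show ?thesis by simp
  qed
qed

lemma kernel_fibre_sum_zero:
  assumes fin: "finite A" and ker: "phi x0 A c = 0" and adm: "admissible x0 A \<tau>"
  shows "(\<Sum>\<sigma>\<in>Pow A. if admissible x0 A \<sigma> \<and> restriction x0 \<sigma> = restriction x0 \<tau> then c \<sigma> else 0) = 0"
    (is "?fibre_sum = 0")
proof -
  have "0 = phi x0 A c (restriction x0 \<tau>)"
    using ker by simp
  also have "\<dots> = (\<Sum>\<sigma>\<in>Pow A. (-1) ^ (card \<tau> - 1) *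
      (if admissible x0 A \<sigma> \<and> restriction x0 \<sigma> = restriction x0 \<tau> then c \<sigma> else 0))"
    unfolding phi_def by (rule sum.cong) (auto simp: phi_basis_admissible[OF fin _ adm])
  also have "\<dots> = (-1) ^ (card \<tau> - 1) * ?fibre_sum"
    by (simp add: sum_distrib_left)
  finally show ?thesis by simp
qed

lemma kernel_in_span:
  assumes fin: "finite A" and c: "c \<in> Dspace A" and ker: "phi x0 A c = 0"
  shows "c \<in> qvec.span (Vgens x0 A \<union> Dsub x0 A)"
proof -
  define R where "R T = (SOME \<rho>. admissible x0 A \<rho> \<and> restriction x0 \<rho> = T)" for T
  have R: "admissible x0 A (R (restriction x0 \<sigma>)) \<and> restriction x0 (R (restriction x0 \<sigma>)) = restriction x0 \<sigma>"
    if "admissible x0 A \<sigma>" for \<sigma>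
    unfolding R_def by (rule someI[of _ \<sigma>]) (use that in blast)
  define r where "r \<sigma> = (if admissible x0 A \<sigma> then basis_vec (R (restriction x0 \<sigma>)) else 0)" for \<sigma>
  have "basis_vec \<sigma> - r \<sigma> \<in> qvec.span (Vgens x0 A \<union> Dsub x0 A)" if \<sigma>: "\<sigma> \<subseteq> A" for \<sigma>
  proof -
    consider "admissible x0 A \<sigma>" | "x0 \<notin> \<sigma>" | "x0 \<in> \<sigma>" "has_E_pair x0 A \<sigma>"
      using \<sigma> unfolding admissible_def by blast
    then show ?thesis
    proof cases
      case 1
      then have "basis_vec \<sigma> - r \<sigma> \<in> qvec.span (Vgens x0 A)"
        unfolding r_def using admissible_diff_in_span_Vgens[OF fin 1] R[OF 1] by simp
      then show ?thesis
        using qvec.span_mono[of "Vgens x0 A"] by blast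
    next
      case 2
      then have "basis_vec \<sigma> \<in> Dsub x0 A" and "r \<sigma> = 0"
        using basis_vec_in_Dsub[OF \<sigma>] unfolding r_def admissible_def by auto
      then show ?thesis
        by (simp add: qvec.span_base)
    next
      case 3
      then have "basis_vec \<sigma> \<in> Vgens x0 A" and "r \<sigma> = 0"
        using basis_vec_E_pair_in_Vgens[OF \<sigma>] unfolding r_def admissible_def by auto
      then show ?thesis
        by (simp add: qvec.span_base)
    qed
  qed
  then have "(\<Sum>\<sigma>\<in>Pow A. scaleQ (c \<sigma>) (basis_vec \<sigma> - r \<sigma>)) \<in> qvec.span (Vgens x0 A \<union> Dsub x0 A)"
    by (intro qvec.span_sum qvec.span_scale) auto
  moreover have "(\<Sum>\<sigma>\<in>Pow A. scaleQ (c \<sigma>) (r \<sigma>)) = 0"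
  proof
    fix \<tau>
    show "(\<Sum>\<sigma>\<in>Pow A. scaleQ (c \<sigma>) (r \<sigma>)) \<tau> = 0 \<tau>"
    proof (cases "\<exists>\<rho>. admissible x0 A \<rho> \<and> R (restriction x0 \<rho>) = \<tau>")
      case True
      then obtain \<rho> where \<rho>: "admissible x0 A \<rho>" "R (restriction x0 \<rho>) = \<tau>"
        by blast
      then have \<tau>: "admissible x0 A \<tau>" "restriction x0 \<tau> = restriction x0 \<rho>"
        using R[OF \<rho>(1)] by auto
      have "R (restriction x0 \<sigma>) = \<tau> \<longleftrightarrow> restriction x0 \<sigma> = restriction x0 \<tau>"
        if "admissible x0 A \<sigma>" for \<sigma>
        using R[OF that] \<tau>(2) \<rho>(2) by metis
      then have "scaleQ (c \<sigma>) (r \<sigma>) \<tau> =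
          (if admissible x0 A \<sigma> \<and> restriction x0 \<sigma> = restriction x0 \<tau> then c \<sigma> else 0)" for \<sigma>
        unfolding r_def scaleQ_def basis_vec_def by auto
      then show ?thesis
        using kernel_fibre_sum_zero[OF fin ker \<tau>(1)] by (simp add: sum_apply)
    next
      case False
      then have "scaleQ (c \<sigma>) (r \<sigma>) \<tau> = 0" for \<sigma>
        unfolding r_def scaleQ_def basis_vec_def by auto
      then show ?thesis
        by (simp add: sum_apply)
    qed
  qed
  ultimately show ?thesis
    using Dspace_basis_expansion[OF fin c]
    by (simp add: qvec.scale_right_diff_distrib sum_subtractf)
qed

lemma Vsub_eq_ker_phibar:
  assumes fin: "finite A" and x0: "x0 \<in> A"
  shows "Vsub x0 A = ker_phibar x0 A"
proof -
  have K: "ker_phibar x0 A = cls x0 A ` (Dspace A \<inter> {c. phi x0 A c = 0})"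
    unfolding ker_phibar_def zero_fun_def by blast
  have V: "Vsub x0 A = cls x0 A ` qvec.span (Vgens x0 A)"
    unfolding Vsub_def Vgens_def qspan_eq_span ..
  have "ker_phibar x0 A \<subseteq> Vsub x0 A"
  proof
    fix C
    assume "C \<in> ker_phibar x0 A"
    then obtain c where c: "c \<in> Dspace A" "phi x0 A c = 0" and C: "C = cls x0 A c"
      unfolding K by blast
    obtain g d where gd: "c = g + d" "g \<in> qvec.span (Vgens x0 A)" "d \<in> Dsub x0 A"
      using kernel_in_span[OF fin c]
      unfolding qvec.span_Un qvec.span_eq_iff[THEN iffD2, OF subspace_Dsub] by blast
    then have "C = cls x0 A g"
      unfolding C using cls_add_Dsub by simp
    then show "C \<in> Vsub x0 A"
      unfolding V using gd(2) by blast
  qed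
  moreover have "Vsub x0 A \<subseteq> ker_phibar x0 A"
    unfolding K V using span_Vgens_in_kernel[OF fin x0] by (rule image_mono)
  ultimately show ?thesis by blast
qed

theorem lemma3p2:
  fixes x :: "nat \<Rightarrow> (complex ^ 'l::finite) set" and n :: nat and A :: "(complex ^ 'l) set set"
  assumes A_def: "A = x ` {0..n}"
    and inj: "inj_on x {0..n}"
    and arr: "subspace_arrangement A"
    and order: "\<And>i j k. 1 \<le> i \<Longrightarrow> i < j \<Longrightarrow> j < k \<Longrightarrow> k \<le> n \<Longrightarrow>
                  simrel (x 0) (x i) (x k) \<Longrightarrow> simrel (x 0) (x i) (x j)"
  shows "Vsub (x 0) A = ker_phibar (x 0) A"
  using Vsub_eq_ker_phibar[of A "x 0"] unfolding A_def by simp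

end
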